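(* Let $(X,\tau)$ be a topological space with an operation $\gamma$ on $\tau$. A subset $A$ of $X$ is $\gamma^{*}$-semi-closed if and only if there exists a $\gamma$-closed set $F$ such that $int_\gamma(F)\subseteq A\subseteq F$.
   Context: An operation on $\tau$ is a map $\gamma:\tau\to P(X)$, $V\mapsto V^\gamma$, with $V\subseteq V^\gamma$ for every $V\in\tau$. For $A\subseteq X$, $int_\gamma(A)=\{x\in A: \text{there is an open } N \text{ with } x\in N,\ N^\gamma\subseteq A\}$; $A$ is $\gamma$-open iff $A=int_\gamma(A)$, and $\gamma$-closed iff $X-A$ is $\gamma$-open. $cl_\gamma(A)$ is the set of $x\in X$ such that $U^\gamma\cap A\neq\emptyset$ for every open $U\ni x$. $A$ is $\gamma^{*}$-semi-open if there is a $\gamma$-open set $O$ with $O\subseteq A\subseteq cl_\gamma(O)$; $A$ is $\gamma^{*}$-semi-closed if $X-A$ is $\gamma^{*}$-semi-open. *)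

theory Defs
  imports "HOL-Analysis.Analysis"
begin

text \<open>An operation on the open sets of the topology T (with X = topspace T):
  a map gamma from open sets to subsets of X with V \<subseteq> gamma V.
  Values of gamma on non-open sets are irrelevant.\<close>
definition operation_on :: "'a topology \<Rightarrow> ('a set \<Rightarrow> 'a set) \<Rightarrow> bool" where
  "operation_on T g \<longleftrightarrow> (\<forall>V. openin T V \<longrightarrow> V \<subseteq> g V \<and> g V \<subseteq> topspace T)"

definition gamma_int :: "'a topology \<Rightarrow> ('a set \<Rightarrow> 'a set) \<Rightarrow> 'a set \<Rightarrow> 'a set" where
  "gamma_int T g A = {x \<in> A. \<exists>N. openin T N \<and> x \<in> N \<and> g N \<subseteq> A}"

definition gamma_open :: "'a topology \<Rightarrow> ('a set \<Rightarrow> 'a set) \<Rightarrow> 'a set \<Rightarrow> bool" where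
  "gamma_open T g A \<longleftrightarrow> A = gamma_int T g A"

definition gamma_closed :: "'a topology \<Rightarrow> ('a set \<Rightarrow> 'a set) \<Rightarrow> 'a set \<Rightarrow> bool" where
  "gamma_closed T g A \<longleftrightarrow> A \<subseteq> topspace T \<and> gamma_open T g (topspace T - A)"

definition gamma_cl :: "'a topology \<Rightarrow> ('a set \<Rightarrow> 'a set) \<Rightarrow> 'a set \<Rightarrow> 'a set" where
  "gamma_cl T g A = {x \<in> topspace T. \<forall>U. openin T U \<and> x \<in> U \<longrightarrow> g U \<inter> A \<noteq> {}}"

definition gamma_star_semi_open :: "'a topology \<Rightarrow> ('a set \<Rightarrow> 'a set) \<Rightarrow> 'a set \<Rightarrow> bool" where
  "gamma_star_semi_open T g A \<longleftrightarrow> (\<exists>U. gamma_open T g U \<and> U \<subseteq> A \<and> A \<subseteq> gamma_cl T g U)"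

definition gamma_star_semi_closed :: "'a topology \<Rightarrow> ('a set \<Rightarrow> 'a set) \<Rightarrow> 'a set \<Rightarrow> bool" where
  "gamma_star_semi_closed T g A \<longleftrightarrow> A \<subseteq> topspace T \<and> gamma_star_semi_open T g (topspace T - A)"

end

theory Submission
  imports Defs
begin

text \<open>Complementation turns \<open>cl\<^sub>\<gamma>\<close> into \<open>int\<^sub>\<gamma>\<close>, so for
  \<open>F = X - O\<close> the two conditions \<open>int\<^sub>\<gamma>(F) \<subseteq> A \<subseteq> F\<close> are exactly the complements of
  \<open>O \<subseteq> X - A \<subseteq> cl\<^sub>\<gamma>(O)\<close>, and the \<open>\<gamma>\<close>-closed sets are exactly such \<open>F\<close>
  with \<open>O\<close> \<open>\<gamma>\<close>-open.\<close>

lemma gamma_open_subset_topspace: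
  assumes "gamma_open T g U"
  shows "U \<subseteq> topspace T"
proof
  fix x assume "x \<in> U"
  then have "x \<in> gamma_int T g U" using assms unfolding gamma_open_def by simp
  then obtain N where "openin T N" "x \<in> N" unfolding gamma_int_def by blast
  then show "x \<in> topspace T" using openin_subset by blast
qed

lemma gamma_closed_iff_complement_gamma_open:
  "gamma_closed T g F \<longleftrightarrow> (\<exists>U. gamma_open T g U \<and> F = topspace T - U)"
proof
  assume "gamma_closed T g F"
  then show "\<exists>U. gamma_open T g U \<and> F = topspace T - U"
    unfolding gamma_closed_def by (intro exI[of _ "topspace T - F"]) auto
next
  assume "\<exists>U. gamma_open T g U \<and> F = topspace T - U"
  then obtain U where U: "gamma_open T g U" "F = topspace T - U" by blast
  then have "topspace T - F = U" using gamma_open_subset_topspace by blast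
  then show "gamma_closed T g F" using U unfolding gamma_closed_def by simp
qed

text \<open>Both hypotheses on \<open>\<gamma>\<close> are needed: \<open>\<gamma>(N) \<subseteq> X\<close> makes
  \<open>\<gamma>(N) \<inter> U = {}\<close> equivalent to \<open>\<gamma>(N) \<subseteq> X - U\<close>, and \<open>N \<subseteq> \<gamma>(N)\<close> then forces \<open>x \<notin> U\<close>.\<close>

lemma gamma_int_complement:
  assumes "operation_on T g"
  shows "gamma_int T g (topspace T - U) = topspace T - gamma_cl T g U"
proof -
  have "g N \<inter> U = {} \<longleftrightarrow> g N \<subseteq> topspace T - U" "N \<subseteq> g N" if "openin T N" for N
    using assms that unfolding operation_on_def by auto
  then show ?thesis
    unfolding gamma_int_def gamma_cl_def by blast
qed

theorem proposition3p29:
  fixes T :: "'a topology" and g :: "'a set \<Rightarrow> 'a set" and A :: "'a set"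
  assumes "operation_on T g"
    and "A \<subseteq> topspace T"
  shows "gamma_star_semi_closed T g A \<longleftrightarrow>
         (\<exists>F. gamma_closed T g F \<and> gamma_int T g F \<subseteq> A \<and> A \<subseteq> F)"
proof -
  have cl_sub: "gamma_cl T g U \<subseteq> topspace T" for U
    unfolding gamma_cl_def by blast
  have "gamma_int T g (topspace T - U) \<subseteq> A \<longleftrightarrow> topspace T - A \<subseteq> gamma_cl T g U" for U
    using gamma_int_complement[OF assms(1)] cl_sub assms(2) by blast
  moreover have "A \<subseteq> topspace T - U \<longleftrightarrow> U \<subseteq> topspace T - A" if "gamma_open T g U" for U
    using gamma_open_subset_topspace[OF that] assms(2) by blast
  ultimately show ?thesis
    unfolding gamma_star_semi_closed_def gamma_star_semi_open_def
      gamma_closed_iff_complement_gamma_open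
    using assms(2) by blast
qed

end
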